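(* Let $A$ be an essential arrangement of affine hyperplanes in a real affine space $V$, $f_0$ a non-constant affine-linear function on $V$, and for $t>0$ let $f_t=1-f_0/t$, $H_t=\{f_t=0\}$, $A_t=A\cup\{H_t\}$. Let $t$ be large enough that the bounded domains of $A_t$ correspond bijectively to the bounded or growing domains of $A$. Let $\Delta_t$ be a bounded domain of $A_t$ and $\Delta$ the corresponding bounded or growing domain of $A$. If $f_t>0$ on $\Delta_t$, let $g_t$ be the positive branch of $(1-f_0/t)^t$ on $\Delta_t$. Then: - the external support of $\Delta_t$ with respect to $f_t$ is a face of the arrangement $A$; - for every sufficiently large $t$ this external support coincides with the support face $\Sigma_\Delta$ of $f_0$ on $\Delta$; - $\lim_{t\to+\infty}c(g_t,\Delta_t)=e^{-f_0(\Sigma_\Delta)}$.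
   Context: $A$ is a finite set of affine hyperplanes in $V$ with at least one vertex (a point which is an intersection of some of them). Domains and faces of an arrangement: domains are the components of the complement of the union of its hyperplanes; faces are the components of $F$ minus the hyperplanes not containing $F$, for edges $F$ (nonempty intersections). A domain is growing if it is unbounded and $f_0\to+\infty$ at infinity within it. For all large $t$ the bounded domains of $A_t$ are the bounded domains of $A$ together with the sets $\Delta\cap\{f_0<t\}$ for growing domains $\Delta$ of $A$; the correspondence sends a bounded $\Delta$ to itself and a growing $\Delta$ to $\Delta\cap\{f_0<t\}$. For a bounded or growing domain $\Delta$, $f_0$ attains its minimum on $\bar\Delta$; this minimum set is a union of faces of $A$, and the unique one of highest dimension is the support face $\Sigma_\Delta$. For a bounded domain $D$ of an arrangement and an affine function $g$ bounded on $D$, the set of points of $\bar D$ where $|g|$ attains its maximum is a union of faces on which $g$ is constant; the unique one of highest dimension is the external support of $D$ with respect to $g$. For a branch $\tilde g$ of a power of $g$ on $D$, $c(\tilde g,D)$ is the value of (the continuous extension of) $\tilde g$ on that external support. *)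

theory Defs
  imports "HOL-Analysis.Analysis"
begin

definition affine_hyperplane :: "'a::euclidean_space set \<Rightarrow> bool" where
  "affine_hyperplane H \<longleftrightarrow> (\<exists>a b. a \<noteq> 0 \<and> H = {x. a \<bullet> x = b})"

definition arrangement :: "'a::euclidean_space set set \<Rightarrow> bool" where
  "arrangement A \<longleftrightarrow> finite A \<and> (\<forall>H\<in>A. affine_hyperplane H)"

text \<open>Edges: nonempty intersections of subfamilies (the empty subfamily gives the whole space).\<close>
definition edges :: "'a::euclidean_space set set \<Rightarrow> 'a set set" where
  "edges A = {\<Inter>B | B. B \<subseteq> A \<and> \<Inter>B \<noteq> {}}"

definition essential :: "'a::euclidean_space set set \<Rightarrow> bool" where
  "essential A \<longleftrightarrow> (\<exists>x. {x} \<in> edges A)"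

definition domains :: "'a::euclidean_space set set \<Rightarrow> 'a set set" where
  "domains A = components (UNIV - \<Union>A)"

definition faces :: "'a::euclidean_space set set \<Rightarrow> 'a set set" where
  "faces A = (\<Union>F\<in>edges A. components (F - \<Union>{H\<in>A. \<not> F \<subseteq> H}))"

definition affine_nonconst :: "('a::euclidean_space \<Rightarrow> real) \<Rightarrow> bool" where
  "affine_nonconst f \<longleftrightarrow> (\<exists>c d. c \<noteq> 0 \<and> f = (\<lambda>x. c \<bullet> x + d))"

definition growing :: "'a::euclidean_space set set \<Rightarrow> ('a \<Rightarrow> real) \<Rightarrow> 'a set \<Rightarrow> bool" where
  "growing A f0 D \<longleftrightarrow> D \<in> domains A \<and> \<not> bounded D \<and>
     (\<forall>M. \<exists>R. \<forall>x\<in>D. norm x \<ge> R \<longrightarrow> f0 x \<ge> M)"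

definition bdd_or_growing :: "'a::euclidean_space set set \<Rightarrow> ('a \<Rightarrow> real) \<Rightarrow> 'a set set" where
  "bdd_or_growing A f0 = {D \<in> domains A. bounded D \<or> growing A f0 D}"

definition bounded_domains :: "'a::euclidean_space set set \<Rightarrow> 'a set set" where
  "bounded_domains A = {D \<in> domains A. bounded D}"

definition ft :: "('a::euclidean_space \<Rightarrow> real) \<Rightarrow> real \<Rightarrow> 'a \<Rightarrow> real" where
  "ft f0 t x = 1 - f0 x / t"

definition Ht :: "('a::euclidean_space \<Rightarrow> real) \<Rightarrow> real \<Rightarrow> 'a set" where
  "Ht f0 t = {x. ft f0 t x = 0}"

definition At :: "'a::euclidean_space set set \<Rightarrow> ('a \<Rightarrow> real) \<Rightarrow> real \<Rightarrow> 'a set set" where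
  "At A f0 t = insert (Ht f0 t) A"

definition corr :: "('a::euclidean_space \<Rightarrow> real) \<Rightarrow> real \<Rightarrow> 'a set \<Rightarrow> 'a set" where
  "corr f0 t D = (if bounded D then D else D \<inter> {x. f0 x < t})"

definition large_enough :: "'a::euclidean_space set set \<Rightarrow> ('a \<Rightarrow> real) \<Rightarrow> real \<Rightarrow> bool" where
  "large_enough A f0 t \<longleftrightarrow> t > 0 \<and>
     bij_betw (corr f0 t) (bdd_or_growing A f0) (bounded_domains (At A f0 t))"

definition min_set :: "('a::euclidean_space \<Rightarrow> real) \<Rightarrow> 'a set \<Rightarrow> 'a set" where
  "min_set f0 D = {x \<in> closure D. \<forall>y\<in>closure D. f0 x \<le> f0 y}"

definition support_face :: "'a::euclidean_space set set \<Rightarrow> ('a \<Rightarrow> real) \<Rightarrow> 'a set \<Rightarrow> 'a set" where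
  "support_face A f0 D = (THE F. F \<in> faces A \<and> F \<subseteq> min_set f0 D \<and>
      (\<forall>G\<in>faces A. G \<subseteq> min_set f0 D \<and> G \<noteq> F \<longrightarrow> aff_dim G < aff_dim F))"

definition max_abs_set :: "('a::euclidean_space \<Rightarrow> real) \<Rightarrow> 'a set \<Rightarrow> 'a set" where
  "max_abs_set g D = {x \<in> closure D. \<forall>y\<in>closure D. \<bar>g y\<bar> \<le> \<bar>g x\<bar>}"

definition ext_support :: "'a::euclidean_space set set \<Rightarrow> 'a set \<Rightarrow> ('a \<Rightarrow> real) \<Rightarrow> 'a set" where
  "ext_support B D g = (THE F. F \<in> faces B \<and> F \<subseteq> max_abs_set g D \<and>
      (\<exists>v. \<forall>x\<in>F. g x = v) \<and>
      (\<forall>G\<in>faces B. G \<subseteq> max_abs_set g D \<and> (\<exists>v. \<forall>x\<in>G. g x = v) \<and> G \<noteq> F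
          \<longrightarrow> aff_dim G < aff_dim F))"

text \<open>Value on a set S (in the closure of D) of the continuous extension of h from D.\<close>
definition ext_value :: "('a::euclidean_space \<Rightarrow> real) \<Rightarrow> 'a set \<Rightarrow> 'a set \<Rightarrow> real" where
  "ext_value h D S = Lim (at (SOME x. x \<in> S) within D) h"

text \<open>c(g, D) where g is a branch of a power of the affine g0 on the bounded domain D of B.\<close>
definition c_const :: "'a::euclidean_space set set \<Rightarrow> ('a \<Rightarrow> real) \<Rightarrow> ('a \<Rightarrow> real) \<Rightarrow> 'a set \<Rightarrow> real" where
  "c_const B g0 h D = ext_value h D (ext_support B D g0)"

definition gt :: "('a::euclidean_space \<Rightarrow> real) \<Rightarrow> real \<Rightarrow> 'a \<Rightarrow> real" where
  "gt f0 t x = (ft f0 t x) powr t"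

end

(*
  The minimum set M of f0 on the closure of a bounded or growing domain is a face, in the
  sense of convex geometry, of that polyhedron. For a point z of M lying on the fewest
  hyperplanes of A, every hyperplane through z contains M; hence the face of A through z
  has the largest affine hull among the faces of A inside M, and it is the support face.
  Once t exceeds the minimum m of f0, the new hyperplane {f0 = t} misses M, so the faces of
  A_t inside M are those of A. Since f_t = 1 - f0/t is positive on the bounded domain
  Delta_t, |f_t| is maximal exactly where f0 is minimal, and the minimum set of f0 on
  Delta_t is still M; so the external support is the support face, where g_t equals
  (1 - m/t)^t, which tends to exp(-m).
*)
theory Submission
  imports Defs
begin

section \<open>Hyperplanes and side cells\<close>

definition hp_equation :: "'a::euclidean_space set \<Rightarrow> 'a \<times> real" where
  "hp_equation H = (SOME ab. fst ab \<noteq> 0 \<and> H = {x. fst ab \<bullet> x = snd ab})"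

definition hp_level :: "'a::euclidean_space set \<Rightarrow> 'a \<Rightarrow> real" where
  "hp_level H x = fst (hp_equation H) \<bullet> x - snd (hp_equation H)"

lemma affine_hyperplane_eq_level:
  assumes "affine_hyperplane H"
  shows "H = {x. hp_level H x = 0}"
proof -
  have "\<exists>ab. fst ab \<noteq> 0 \<and> H = {x. fst ab \<bullet> x = snd ab}"
    using assms unfolding affine_hyperplane_def by auto
  from someI_ex[OF this] show ?thesis
    unfolding hp_level_def hp_equation_def by auto
qed

lemma mem_affine_hyperplane_iff: "affine_hyperplane H \<Longrightarrow> x \<in> H \<longleftrightarrow> hp_level H x = 0"
  using affine_hyperplane_eq_level by blast

lemma continuous_on_hp_level [continuous_intros]: "continuous_on S (hp_level H)"
  unfolding hp_level_def by (intro continuous_intros)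

lemma hp_level_convex_comb:
  "hp_level H ((1 - u) *\<^sub>R x + u *\<^sub>R y) = (1 - u) * hp_level H x + u * hp_level H y"
  unfolding hp_level_def by (simp add: inner_add_right algebra_simps)

lemma convex_hp_level_sign: "convex {x. 0 < hp_level H x * k}"
proof -
  have "{x. 0 < hp_level H x * k} =
      {x. (k *\<^sub>R fst (hp_equation H)) \<bullet> x > k * snd (hp_equation H)}"
    unfolding hp_level_def by (auto simp: algebra_simps)
  then show ?thesis by (metis convex_halfspace_gt)
qed

lemma connected_ivt_hp_level:
  assumes "connected C" "u \<in> C" "v \<in> C" "hp_level H u \<le> 0" "0 \<le> hp_level H v"
  shows "\<exists>z\<in>C. hp_level H z = 0"
  using connected_ivt_hyperplane[OF assms(1-3), of "fst (hp_equation H)" "snd (hp_equation H)"] assms(4,5)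
  unfolding hp_level_def by auto

lemma affine_hyperplane_imp_affine: "affine_hyperplane H \<Longrightarrow> affine H"
  unfolding affine_hyperplane_def using affine_hyperplane by blast

lemma connected_same_side:
  assumes C: "connected C" and H: "affine_hyperplane H" "C \<inter> H = {}"
    and x: "x \<in> C" and p: "p \<in> C"
  shows "0 < hp_level H x * hp_level H p"
proof (rule ccontr)
  assume sign: "\<not> 0 < hp_level H x * hp_level H p"
  have "hp_level H x \<noteq> 0" using x H mem_affine_hyperplane_iff by blast
  have "\<exists>z\<in>C. hp_level H z = 0"
  proof (cases "hp_level H x < 0")
    case True
    with sign have "0 \<le> hp_level H p" by (auto simp: zero_less_mult_iff not_less)
    with True show ?thesis by (intro connected_ivt_hp_level[OF C x p]) auto
  next
    case False
    with sign \<open>hp_level H x \<noteq> 0\<close> have "hp_level H p \<le> 0"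
      by (auto simp: zero_less_mult_iff not_less)
    with False show ?thesis by (intro connected_ivt_hp_level[OF C p x]) auto
  qed
  then show False using H mem_affine_hyperplane_iff by blast
qed

definition side_cell :: "'a::euclidean_space set set \<Rightarrow> 'a \<Rightarrow> 'a set" where
  "side_cell R p = {x. \<forall>H\<in>R. 0 < hp_level H x * hp_level H p}"

lemma side_cell_eq_INT: "side_cell R p = (\<Inter>H\<in>R. {x. 0 < hp_level H x * hp_level H p})"
  unfolding side_cell_def by auto

lemma open_side_cell: "finite R \<Longrightarrow> open (side_cell R p)"
  unfolding side_cell_eq_INT by (intro open_INT ballI open_Collect_less continuous_intros)

lemma convex_side_cell: "convex (side_cell R p)"
  unfolding side_cell_eq_INT by (simp add: convex_INT convex_hp_level_sign)

lemma components_diff_hyperplanes_eq_side_cell: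
  assumes S: "convex S" and R: "finite R" "\<forall>H\<in>R. affine_hyperplane H"
    and C: "C \<in> components (S - \<Union>R)" and p: "p \<in> C"
  shows "C = S \<inter> side_cell R p"
proof
  have pS: "p \<in> S - \<Union>R" using C p in_components_subset by blast
  show "S \<inter> side_cell R p \<subseteq> C"
  proof (rule components_maximal[OF C])
    show "connected (S \<inter> side_cell R p)"
      by (intro convex_connected convex_Int S convex_side_cell)
    show "S \<inter> side_cell R p \<subseteq> S - \<Union> R"
      unfolding side_cell_def using R(2) mem_affine_hyperplane_iff by fastforce
    have "p \<in> S \<inter> side_cell R p"
      using pS R(2) mem_affine_hyperplane_iff unfolding side_cell_def
      by (fastforce simp: zero_less_mult_iff)
    then show "C \<inter> (S \<inter> side_cell R p) \<noteq> {}" using p by blast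
  qed
  show "C \<subseteq> S \<inter> side_cell R p"
  proof
    fix x assume x: "x \<in> C"
    have xS: "x \<in> S - \<Union>R" using C x in_components_subset by blast
    have "0 < hp_level H x * hp_level H p" if "H \<in> R" for H
      using connected_same_side[OF in_components_connected[OF C] _ _ x p] that R(2)
        in_components_subset[OF C] by blast
    then show "x \<in> S \<inter> side_cell R p" using xS unfolding side_cell_def by blast
  qed
qed

section \<open>Domains\<close>

lemma domain_eq_side_cell:
  assumes "arrangement A" "D \<in> domains A" "p \<in> D"
  shows "D = side_cell A p"
  using components_diff_hyperplanes_eq_side_cell[of UNIV A D p] assms
  unfolding arrangement_def domains_def by auto

lemma hp_level_domain_nonzero:
  assumes "arrangement A" "D \<in> domains A" "p \<in> D" "H \<in> A"
  shows "hp_level H p \<noteq> 0"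
  using assms in_components_subset mem_affine_hyperplane_iff
  unfolding arrangement_def domains_def by blast

lemma open_domain: "arrangement A \<Longrightarrow> D \<in> domains A \<Longrightarrow> open D"
  by (metis arrangement_def domain_eq_side_cell domains_def in_components_nonempty
      open_side_cell ex_in_conv)

lemma closure_domain:
  assumes A: "arrangement A" and D: "D \<in> domains A" and p: "p \<in> D"
  shows "closure D = {x. \<forall>H\<in>A. 0 \<le> hp_level H x * hp_level H p}"
proof
  have "closed {x. \<forall>H\<in>A. 0 \<le> hp_level H x * hp_level H p}"
    unfolding Ball_Collect[symmetric] Collect_ball_eq
    by (intro closed_INT ballI closed_Collect_le continuous_intros)
  moreover have "D \<subseteq> {x. \<forall>H\<in>A. 0 \<le> hp_level H x * hp_level H p}"
    using domain_eq_side_cell[OF A D p] unfolding side_cell_def by (auto intro: less_imp_le)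
  ultimately show "closure D \<subseteq> {x. \<forall>H\<in>A. 0 \<le> hp_level H x * hp_level H p}"
    by (rule closure_minimal[rotated])
  show "{x. \<forall>H\<in>A. 0 \<le> hp_level H x * hp_level H p} \<subseteq> closure D"
  proof
    fix x assume x: "x \<in> {x. \<forall>H\<in>A. 0 \<le> hp_level H x * hp_level H p}"
    have "open_segment x p \<subseteq> D"
    proof
      fix y assume "y \<in> open_segment x p"
      then obtain u where u: "0 < u" "u < 1" "y = (1 - u) *\<^sub>R x + u *\<^sub>R p"
        unfolding in_segment by blast
      have "0 < hp_level H y * hp_level H p" if H: "H \<in> A" for H
      proof -
        have "0 < u * (hp_level H p * hp_level H p)"
          using hp_level_domain_nonzero[OF A D p H] u(1)
          by (metis mult_pos_pos not_real_square_gt_zero)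
        moreover have "0 \<le> (1 - u) * (hp_level H x * hp_level H p)"
          using x H u(2) by simp
        ultimately show ?thesis
          unfolding u(3) hp_level_convex_comb by (simp add: algebra_simps)
      qed
      then show "y \<in> D" using domain_eq_side_cell[OF A D p] unfolding side_cell_def by auto
    qed
    then have "closure (open_segment x p) \<subseteq> closure D" by (rule closure_mono)
    then show "x \<in> closure D" using p closure_subset by (cases "x = p") auto
  qed
qed

lemma convex_closure_domain: "arrangement A \<Longrightarrow> D \<in> domains A \<Longrightarrow> convex (closure D)"
  by (metis convex_closure convex_side_cell domain_eq_side_cell domains_def
      in_components_nonempty ex_in_conv)

lemma closure_domain_same_side:
  assumes A: "arrangement A" and D: "D \<in> domains A" and H: "H \<in> A"
    and x: "x \<in> closure D - H" and y: "y \<in> closure D - H"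
  shows "0 < hp_level H x * hp_level H y"
proof -
  obtain p where p: "p \<in> D" using D in_components_nonempty unfolding domains_def by blast
  have "hp_level H x \<noteq> 0" "hp_level H y \<noteq> 0" "hp_level H p \<noteq> 0"
    using x y H A hp_level_domain_nonzero[OF A D p H] mem_affine_hyperplane_iff
    unfolding arrangement_def by auto
  moreover have "0 \<le> hp_level H x * hp_level H p" "0 \<le> hp_level H y * hp_level H p"
    using x y H closure_domain[OF A D p] by auto
  ultimately show ?thesis by (auto simp: zero_le_mult_iff zero_less_mult_iff)
qed

lemma hyperplane_Int_closure_domain_face_of:
  assumes A: "arrangement A" and D: "D \<in> domains A" and H: "H \<in> A"
  shows "H \<inter> closure D face_of closure D"
proof -
  obtain p where p: "p \<in> D" using D in_components_nonempty unfolding domains_def by blast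
  define a where "a = fst (hp_equation H)"
  define b where "b = snd (hp_equation H)"
  have lev: "hp_level H x = a \<bullet> x - b" for x unfolding hp_level_def a_def b_def ..
  have HS: "H \<inter> closure D = closure D \<inter> {x. a \<bullet> x = b}"
    using A H affine_hyperplane_eq_level[of H] unfolding arrangement_def lev by auto
  have side: "0 \<le> (a \<bullet> x - b) * (a \<bullet> p - b)" if "x \<in> closure D" for x
    using that H closure_domain[OF A D p] by (auto simp: lev)
  show ?thesis
  proof (cases "0 < a \<bullet> p - b")
    case True
    then have "b \<le> a \<bullet> x" if "x \<in> closure D" for x
      using side[OF that] by (simp add: zero_le_mult_iff)
    then show ?thesis unfolding HS
      by (intro face_of_Int_supporting_hyperplane_ge convex_closure_domain[OF A D])
  next
    case False
    then have "a \<bullet> p - b < 0" using hp_level_domain_nonzero[OF A D p H] by (simp add: lev)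
    then have "a \<bullet> x \<le> b" if "x \<in> closure D" for x
      using side[OF that] by (simp add: zero_le_mult_iff)
    then show ?thesis unfolding HS
      by (intro face_of_Int_supporting_hyperplane_le convex_closure_domain[OF A D])
  qed
qed

section \<open>Faces\<close>

lemma affine_Inter_hyperplanes: "arrangement A \<Longrightarrow> B \<subseteq> A \<Longrightarrow> affine (\<Inter>B)"
  unfolding arrangement_def using affine_hyperplane_imp_affine by (intro affine_Inter) blast

lemma face_eq_side_cell:
  assumes A: "arrangement A" and F: "F \<in> edges A"
    and G: "G \<in> components (F - \<Union>{H\<in>A. \<not> F \<subseteq> H})" and q: "q \<in> G"
  shows "G = F \<inter> side_cell {H\<in>A. \<not> F \<subseteq> H} q" and "affine hull G = F"
proof -
  have aF: "affine F" using A F affine_Inter_hyperplanes unfolding edges_def by blast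
  have R: "finite {H\<in>A. \<not> F \<subseteq> H}" "\<forall>H\<in>{H\<in>A. \<not> F \<subseteq> H}. affine_hyperplane H"
    using A unfolding arrangement_def by auto
  show G_eq: "G = F \<inter> side_cell {H\<in>A. \<not> F \<subseteq> H} q"
    using components_diff_hyperplanes_eq_side_cell[OF affine_imp_convex[OF aF] R G q] .
  have "affine hull G = affine hull F"
    unfolding G_eq using q G_eq
    by (intro affine_hull_convex_Int_open affine_imp_convex aF open_side_cell R(1)) blast
  then show "affine hull G = F" using aF by simp
qed

lemma convex_face_component:
  assumes A: "arrangement A" and F: "F \<in> edges A"
    and C: "C \<in> components (F - \<Union>{H\<in>A. \<not> F \<subseteq> H})"
  shows "convex C"
proof -
  obtain q where "q \<in> C" using C in_components_nonempty by blast
  from face_eq_side_cell[OF A F C this] show ?thesis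
    by (metis affine_affine_hull affine_imp_convex convex_Int convex_side_cell)
qed

lemma face_in_components_affine_hull:
  assumes A: "arrangement A" and G: "G \<in> faces A"
  shows "G \<in> components (affine hull G - \<Union>{H\<in>A. \<not> affine hull G \<subseteq> H})"
proof -
  obtain F where F: "F \<in> edges A" and GF: "G \<in> components (F - \<Union>{H\<in>A. \<not> F \<subseteq> H})"
    using G unfolding faces_def by blast
  obtain q where "q \<in> G" using GF in_components_nonempty by blast
  then have "affine hull G = F" using face_eq_side_cell(2)[OF A F GF] by blast
  then show ?thesis using GF by simp
qed

definition face_at :: "'a::euclidean_space set set \<Rightarrow> 'a \<Rightarrow> 'a set" where
  "face_at A z = connected_component_set (\<Inter>{H\<in>A. z \<in> H} - \<Union>{H\<in>A. z \<notin> H}) z"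

lemma hyperplanes_not_containing_edge_at:
  "{H\<in>A. \<not> \<Inter>{H\<in>A. z \<in> H} \<subseteq> H} = {H\<in>A. z \<notin> H}"
  by blast

lemma edge_at_in_edges: "\<Inter>{H\<in>A. z \<in> H} \<in> edges A"
  unfolding edges_def by blast

lemma face_at_in_components:
  "face_at A z \<in> components (\<Inter>{H\<in>A. z \<in> H} - \<Union>{H\<in>A. \<not> \<Inter>{H\<in>A. z \<in> H} \<subseteq> H})"
  unfolding face_at_def hyperplanes_not_containing_edge_at by (rule componentsI) blast

lemma mem_face_at: "z \<in> face_at A z"
  unfolding face_at_def by (auto simp: connected_component_refl_eq)

lemma face_at_in_faces: "face_at A z \<in> faces A"
  using edge_at_in_edges face_at_in_components unfolding faces_def by blast

lemma face_at_eq_side_cell: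
  assumes "arrangement A"
  shows "face_at A z = \<Inter>{H\<in>A. z \<in> H} \<inter> side_cell {H\<in>A. z \<notin> H} z"
  using face_eq_side_cell(1)[OF assms edge_at_in_edges face_at_in_components mem_face_at]
  unfolding hyperplanes_not_containing_edge_at .

lemma affine_hull_face_at:
  assumes "arrangement A"
  shows "affine hull (face_at A z) = \<Inter>{H\<in>A. z \<in> H}"
  using face_eq_side_cell(2)[OF assms edge_at_in_edges face_at_in_components mem_face_at] .

lemma face_at_subset_closure_domain:
  assumes A: "arrangement A" and D: "D \<in> domains A" and z: "z \<in> closure D"
  shows "face_at A z \<subseteq> closure D"
proof
  fix y assume y: "y \<in> face_at A z"
  obtain p where p: "p \<in> D" using D in_components_nonempty unfolding domains_def by blast
  have "0 \<le> hp_level H y * hp_level H p" if H: "H \<in> A" for H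
  proof (cases "z \<in> H")
    case True
    then have "y \<in> H" using y face_at_eq_side_cell[OF A] H by auto
    then have "hp_level H y = 0"
      using A H mem_affine_hyperplane_iff unfolding arrangement_def by blast
    then show ?thesis by simp
  next
    case False
    then have "0 < hp_level H y * hp_level H z"
      using y face_at_eq_side_cell[OF A] H unfolding side_cell_def by auto
    moreover have "0 \<le> hp_level H z * hp_level H p" using z H closure_domain[OF A D p] by auto
    ultimately show ?thesis by (auto simp: zero_le_mult_iff zero_less_mult_iff)
  qed
  then show "y \<in> closure D" using closure_domain[OF A D p] by auto
qed

lemma mem_rel_interior_face_at:
  assumes A: "arrangement A"
  shows "z \<in> rel_interior (face_at A z)"
proof -
  have "finite {H\<in>A. z \<notin> H}" using A unfolding arrangement_def by simp
  then have "open (side_cell {H\<in>A. z \<notin> H} z)" by (rule open_side_cell)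
  moreover have "z \<in> side_cell {H\<in>A. z \<notin> H} z"
    using mem_face_at face_at_eq_side_cell[OF A] by blast
  ultimately show ?thesis
    unfolding rel_interior affine_hull_face_at[OF A]
    using mem_face_at face_at_eq_side_cell[OF A] by blast
qed

lemma face_at_subset_face_of_closure_domain:
  assumes A: "arrangement A" and D: "D \<in> domains A"
    and M: "M face_of closure D" and z: "z \<in> M"
  shows "face_at A z \<subseteq> M"
proof (rule subset_of_face_of[OF M])
  show "face_at A z \<subseteq> closure D"
    using face_at_subset_closure_domain[OF A D] M z face_of_imp_subset by blast
  show "M \<inter> rel_interior (face_at A z) \<noteq> {}"
    using z mem_rel_interior_face_at[OF A] by blast
qed

lemma empty_not_face: "{} \<notin> faces A"
  unfolding faces_def using in_components_nonempty by blast

lemma face_eq_face_at: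
  assumes A: "arrangement A" and D: "D \<in> domains A"
    and G: "G \<in> faces A" "G \<subseteq> closure D" and z: "z \<in> closure D"
    and hull: "affine hull G = \<Inter>{H\<in>A. z \<in> H}"
  shows "G = face_at A z"
proof -
  have GC: "G \<in> components (\<Inter>{H\<in>A. z \<in> H} - \<Union>{H\<in>A. \<not> \<Inter>{H\<in>A. z \<in> H} \<subseteq> H})"
    using face_in_components_affine_hull[OF A G(1)] unfolding hull .
  obtain q where q: "q \<in> G" using GC in_components_nonempty by blast
  have G_eq: "G = \<Inter>{H\<in>A. z \<in> H} \<inter> side_cell {H\<in>A. z \<notin> H} q"
    using face_eq_side_cell(1)[OF A edge_at_in_edges GC q]
    unfolding hyperplanes_not_containing_edge_at .
  have "0 < hp_level H z * hp_level H q" if H: "H \<in> A" "z \<notin> H" for H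
  proof (rule closure_domain_same_side[OF A D H(1)])
    show "z \<in> closure D - H" using z H by blast
    have "\<not> \<Inter>{H\<in>A. z \<in> H} \<subseteq> H" using H by blast
    then show "q \<in> closure D - H" using q G(2) H in_components_subset[OF GC] by blast
  qed
  then have "z \<in> G" unfolding G_eq side_cell_def by blast
  then show ?thesis
    using components_eq[OF GC face_at_in_components] mem_face_at by blast
qed

lemma hyperplanes_through_fewest:
  assumes A: "arrangement A" and D: "D \<in> domains A" and M: "M face_of closure D"
    and z: "z \<in> M" and fewest: "\<And>y. y \<in> M \<Longrightarrow> card {H\<in>A. z \<in> H} \<le> card {H\<in>A. y \<in> H}"
    and x: "x \<in> M"
  shows "{H\<in>A. z \<in> H} \<subseteq> {H\<in>A. x \<in> H}"
proof -
  have fin: "finite {H\<in>A. y \<in> H}" for y using A unfolding arrangement_def by simp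
  have MD: "M \<subseteq> closure D" using M face_of_imp_subset by blast
  have mid_M: "midpoint z x \<in> M"
    using face_of_imp_convex[OF M] z x midpoint_in_closed_segment
    unfolding convex_contains_segment by blast
  have mid: "{H\<in>A. midpoint z x \<in> H} \<subseteq> {H\<in>A. z \<in> H} \<inter> {H\<in>A. x \<in> H}"
  proof (cases "z = x")
    case False
    then have "midpoint z x \<in> open_segment z x" by simp
    then show ?thesis
      using face_ofD[OF hyperplane_Int_closure_domain_face_of[OF A D]] z x MD mid_M by blast
  qed simp
  then have "{H\<in>A. midpoint z x \<in> H} = {H\<in>A. z \<in> H}"
    using card_subset_eq[OF fin] fewest[OF mid_M]
    by (metis (no_types, lifting) card_mono fin le_antisym le_inf_iff)
  then show ?thesis using mid by blast
qed

lemma max_dim_face_in_face_of_closure_domain: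
  assumes A: "arrangement A" and D: "D \<in> domains A"
    and M: "M face_of closure D" "M \<noteq> {}"
  obtains G0 where "G0 \<in> faces A" "G0 \<subseteq> M"
    "\<And>G. G \<in> faces A \<Longrightarrow> G \<subseteq> M \<Longrightarrow> G \<noteq> G0 \<Longrightarrow> aff_dim G < aff_dim G0"
proof -
  obtain z where z: "z \<in> M" and fewest: "\<And>y. y \<in> M \<Longrightarrow> card {H\<in>A. z \<in> H} \<le> card {H\<in>A. y \<in> H}"
    using ex_has_least_nat[of "\<lambda>y. y \<in> M" _ "\<lambda>y. card {H\<in>A. y \<in> H}"] M(2) by blast
  note through = hyperplanes_through_fewest[OF A D M(1) z fewest]
  show ?thesis
  proof (rule that[of "face_at A z"])
    show "face_at A z \<in> faces A" by (rule face_at_in_faces)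
    show "face_at A z \<subseteq> M" by (rule face_at_subset_face_of_closure_domain[OF A D M(1) z])
    fix G assume G: "G \<in> faces A" "G \<subseteq> M" "G \<noteq> face_at A z"
    have "G \<subseteq> \<Inter>{H\<in>A. z \<in> H}" using G(2) through by blast
    then have sub: "affine hull G \<subseteq> \<Inter>{H\<in>A. z \<in> H}"
      by (intro hull_minimal affine_Inter_hyperplanes[OF A]) auto
    have dim: "aff_dim (face_at A z) = aff_dim (\<Inter>{H\<in>A. z \<in> H})"
      by (metis aff_dim_affine_hull affine_hull_face_at[OF A])
    have "aff_dim G \<noteq> aff_dim (face_at A z)"
    proof
      assume "aff_dim G = aff_dim (face_at A z)"
      then have "affine hull G = \<Inter>{H\<in>A. z \<in> H}"
        using sub dim G(1) empty_not_face
        by (intro affine_dim_equal affine_affine_hull affine_Inter_hyperplanes[OF A]) auto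
      then have "G = face_at A z"
        using face_eq_face_at[OF A D G(1)] G(2) M(1) z face_of_imp_subset by blast
      then show False using G(3) by blast
    qed
    moreover have "aff_dim G \<le> aff_dim (face_at A z)"
      using aff_dim_subset[OF sub] dim by simp
    ultimately show "aff_dim G < aff_dim (face_at A z)" by simp
  qed
qed

section \<open>Adding a level hyperplane\<close>

lemma diff_hyperplanes_insert_not_containing:
  "\<not> F \<subseteq> H \<Longrightarrow>
    F - \<Union>{H'\<in>insert H A. \<not> F \<subseteq> H'} = F - \<Union>{H'\<in>A. \<not> F \<subseteq> H'} - H"
  by auto

lemma face_insert_disjoint:
  assumes G: "G \<in> faces A" and GH: "G \<inter> H = {}"
  shows "G \<in> faces (insert H A)"
proof -
  obtain F where F: "F \<in> edges A" and GF: "G \<in> components (F - \<Union>{H'\<in>A. \<not> F \<subseteq> H'})"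
    using G unfolding faces_def by blast
  have GsF: "G \<subseteq> F - \<Union>{H'\<in>A. \<not> F \<subseteq> H'}" using GF in_components_subset by blast
  have FH: "\<not> F \<subseteq> H" using GsF GH in_components_nonempty[OF GF] by blast
  have "G \<in> components (F - \<Union>{H'\<in>A. \<not> F \<subseteq> H'} - H)"
    by (rule components_intermediate_subset[OF GF]) (use GsF GH in auto)
  then have "G \<in> components (F - \<Union>{H'\<in>insert H A. \<not> F \<subseteq> H'})"
    unfolding diff_hyperplanes_insert_not_containing[OF FH] .
  moreover have "F \<in> edges (insert H A)" using F unfolding edges_def by blast
  ultimately show ?thesis unfolding faces_def by blast
qed

lemma convex_subset_sublevel_if_constant:
  assumes C: "convex C" and q: "q \<in> C" and f: "f = (\<lambda>x. c \<bullet> x + d)" and t: "f q < t"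
    and trap: "C \<inter> {x. f x < t} \<subseteq> {x. f x = f q}"
  shows "C \<subseteq> {x. f x < t}"
proof
  fix x assume x: "x \<in> C"
  show "x \<in> {x. f x < t}"
  proof (rule ccontr)
    assume "x \<notin> {x. f x < t}"
    then have "c \<bullet> q \<le> (f q + t) / 2 - d" "(f q + t) / 2 - d \<le> c \<bullet> x"
      using t unfolding f by (auto simp: field_simps)
    then obtain w where "w \<in> C" "c \<bullet> w = (f q + t) / 2 - d"
      using connected_ivt_hyperplane[OF convex_connected[OF C] q x] by blast
    moreover from this(2) have "f w = (f q + t) / 2" unfolding f by simp
    ultimately show False using trap t by auto
  qed
qed

lemma face_insert_level_set_imp_face:
  assumes A: "arrangement A" and f: "f0 = (\<lambda>x. c \<bullet> x + d)"
    and G: "G \<in> faces (insert {x. f0 x = t} A)" "G \<noteq> {}" "G \<subseteq> {x. f0 x = m}" and m: "m < t"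
  shows "G \<in> faces A"
proof -
  define H where "H = {x. f0 x = t}"
  obtain F where F: "F \<in> edges (insert H A)"
    and GF: "G \<in> components (F - \<Union>{H'\<in>insert H A. \<not> F \<subseteq> H'})"
    using G(1) unfolding faces_def H_def by blast
  have "G \<inter> H = {}" using G(3) m unfolding H_def by auto
  then have FH: "\<not> F \<subseteq> H" using in_components_subset[OF GF] G(2) by blast
  then have FA: "F \<in> edges A" using F unfolding edges_def by blast
  define R where "R = {H'\<in>A. \<not> F \<subseteq> H'}"
  have GF': "G \<in> components (F - \<Union>R - H)"
    using GF unfolding R_def diff_hyperplanes_insert_not_containing[OF FH] .
  obtain q where q: "q \<in> G" using G(2) by blast
  have qR: "q \<in> F - \<Union>R" using GF' q in_components_subset by blast
  define C where "C = connected_component_set (F - \<Union>R) q"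
  have CR: "C \<in> components (F - \<Union>R)" unfolding C_def using qR by (rule componentsI)
  have qC: "q \<in> C" unfolding C_def using qR by simp
  have convC: "convex C" using convex_face_component[OF A FA CR[unfolded R_def]] .
  have GC: "G \<subseteq> C" unfolding C_def
    by (rule connected_component_maximal[OF q in_components_connected[OF GF']])
       (use GF' in_components_subset in blast)
  have CtG: "C \<inter> {x. f0 x < t} \<subseteq> G"
  proof (rule components_maximal[OF GF'])
    show "connected (C \<inter> {x. f0 x < t})"
      using convex_halfspace_lt[of c "t - d"] unfolding f
      by (intro convex_connected convex_Int convC) (simp add: less_diff_eq)
    show "C \<inter> {x. f0 x < t} \<subseteq> F - \<Union>R - H"
      using in_components_subset[OF CR] unfolding H_def by auto
    show "G \<inter> (C \<inter> {x. f0 x < t}) \<noteq> {}" using q qC G(3) m by auto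
  qed
  have "C \<subseteq> {x. f0 x < t}"
    by (rule convex_subset_sublevel_if_constant[OF convC qC f]) (use q G(3) m CtG in auto)
  then have "G = C" using GC CtG by blast
  then show ?thesis using FA CR unfolding faces_def R_def by blast
qed

section \<open>Minimum sets of affine functions\<close>

lemma min_set_eq_level: "x1 \<in> min_set f D \<Longrightarrow> min_set f D = {x \<in> closure D. f x = f x1}"
  unfolding min_set_def by (auto intro: order_antisym)

lemma min_set_nonempty:
  fixes f :: "'a::euclidean_space \<Rightarrow> real"
  assumes f: "continuous_on UNIV f" and D: "D \<noteq> {}"
    and coercive: "bounded D \<or> (\<forall>M. \<exists>R. \<forall>x\<in>D. R \<le> norm x \<longrightarrow> M \<le> f x)"
  shows "min_set f D \<noteq> {}"
proof (cases "bounded D")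
  case True
  have "\<exists>x\<in>closure D. \<forall>y\<in>closure D. f x \<le> f y"
    using True D f by (intro continuous_attains_inf) (auto intro: continuous_on_subset)
  then show ?thesis unfolding min_set_def by blast
next
  case False
  obtain p where p: "p \<in> D" using D by blast
  obtain R where R: "\<forall>x\<in>D. R \<le> norm x \<longrightarrow> f p + 1 \<le> f x"
    using coercive False by blast
  have "closed ({x. norm x \<le> R} \<union> {x. f p + 1 \<le> f x})"
    by (intro closed_Un closed_Collect_le continuous_intros f)
  moreover have "D \<subseteq> {x. norm x \<le> R} \<union> {x. f p + 1 \<le> f x}" using R by auto
  ultimately have far: "closure D \<subseteq> {x. norm x \<le> R} \<union> {x. f p + 1 \<le> f x}"
    by (rule closure_minimal[rotated])
  have "norm p \<le> R"
  proof (rule ccontr)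
    assume "\<not> norm p \<le> R"
    then have "f p + 1 \<le> f p" using R p by auto
    then show False by simp
  qed
  define K where "K = closure D \<inter> cball 0 R"
  have pK: "p \<in> K" unfolding K_def using p \<open>norm p \<le> R\<close> closure_subset by auto
  moreover have "compact K" unfolding K_def by (intro closed_Int_compact) auto
  ultimately obtain x where x: "x \<in> K" "\<forall>y\<in>K. f x \<le> f y"
    using continuous_attains_inf[of K f] continuous_on_subset[OF f] by blast
  have "f x \<le> f y" if y: "y \<in> closure D" for y
  proof (cases "norm y \<le> R")
    case True then show ?thesis using x y unfolding K_def by auto
  next
    case False
    then have "f p + 1 \<le> f y" using far y by auto
    moreover have "f x \<le> f p" using x(2) pK by blast
    ultimately show ?thesis by linarith
  qed
  then show ?thesis using x unfolding min_set_def K_def by blast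
qed

lemma min_set_face_of:
  assumes D: "convex (closure D)" and f: "f = (\<lambda>x. c \<bullet> x + d)"
  shows "min_set f D face_of closure D"
proof (cases "min_set f D = {}")
  case False
  then obtain x1 where x1: "x1 \<in> min_set f D" by blast
  have "min_set f D = closure D \<inter> {x. c \<bullet> x = f x1 - d}"
    using min_set_eq_level[OF x1] unfolding f by auto
  moreover have "f x1 - d \<le> c \<bullet> x" if "x \<in> closure D" for x
    using x1 that unfolding min_set_def f by auto
  ultimately show ?thesis by (simp add: face_of_Int_supporting_hyperplane_ge D)
qed simp

lemma min_set_Int_open:
  assumes U: "open U" and ne: "min_set f D \<noteq> {}" and sub: "min_set f D \<subseteq> U"
  shows "min_set f (D \<inter> U) = min_set f D"
proof -
  have cl: "closure (D \<inter> U) \<subseteq> closure D" by (intro closure_mono) auto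
  have U_cl: "U \<inter> closure D \<subseteq> closure (D \<inter> U)"
    using open_Int_closure_subset[OF U, of D] by (simp add: Int_commute)
  obtain x1 where x1: "x1 \<in> min_set f D" using ne by blast
  then have "x1 \<in> closure (D \<inter> U)" using sub U_cl unfolding min_set_def by blast
  then show ?thesis
    using cl U_cl sub x1 unfolding min_set_def by (auto intro: order_trans)
qed

section \<open>The deformed arrangement\<close>

lemma ft_pos_iff: "0 < t \<Longrightarrow> 0 < ft f0 t x \<longleftrightarrow> f0 x < t"
  unfolding ft_def by (simp add: field_simps)

lemma At_eq_insert: "t \<noteq> 0 \<Longrightarrow> At A f0 t = insert {x. f0 x = t} A"
  unfolding At_def Ht_def ft_def by (auto simp: field_simps)

lemma max_abs_set_ft_eq_min_set:
  assumes t: "0 < t" and f0: "continuous_on UNIV f0" and pos: "\<forall>x\<in>D. 0 < ft f0 t x"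
  shows "max_abs_set (ft f0 t) D = min_set f0 D"
proof -
  have "closed {x. 0 \<le> ft f0 t x}" unfolding ft_def
    by (intro closed_Collect_le continuous_intros f0) (use t in auto)
  moreover have "D \<subseteq> {x. 0 \<le> ft f0 t x}" using pos by (auto intro: less_imp_le)
  ultimately have nonneg: "closure D \<subseteq> {x. 0 \<le> ft f0 t x}" by (rule closure_minimal[rotated])
  have "\<bar>ft f0 t y\<bar> \<le> \<bar>ft f0 t x\<bar> \<longleftrightarrow> f0 x \<le> f0 y"
    if "x \<in> closure D" "y \<in> closure D" for x y
  proof -
    have "\<bar>ft f0 t x\<bar> = ft f0 t x" "\<bar>ft f0 t y\<bar> = ft f0 t y" using that nonneg by auto
    moreover have "ft f0 t y \<le> ft f0 t x \<longleftrightarrow> f0 x / t \<le> f0 y / t" unfolding ft_def by linarith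
    ultimately show ?thesis using t by (simp add: divide_le_cancel)
  qed
  then show ?thesis unfolding max_abs_set_def min_set_def by blast
qed

lemma Lim_at_within_open_closure:
  fixes h :: "'a::euclidean_space \<Rightarrow> real"
  assumes "open D" "x \<in> closure D" "isCont h x"
  shows "Lim (at x within D) h = h x"
proof -
  have "x islimpt D" using islimpt_closure_open[OF assms(1) refl assms(2)] limpt_of_closure by blast
  then have "\<not> trivial_limit (at x within D)" using trivial_limit_within by blast
  moreover have "(h \<longlongrightarrow> h x) (at x within D)"
    using assms(3) continuous_at_imp_continuous_at_within continuous_within by blast
  ultimately show ?thesis by (rule tendsto_Lim)
qed

lemma the_strictly_greatest_eqI:
  fixes d :: "'a \<Rightarrow> 'b::order"
  assumes "F \<in> S" "P F" "\<And>G. G \<in> S \<Longrightarrow> P G \<Longrightarrow> G \<noteq> F \<Longrightarrow> d G < d F"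
  shows "(THE F. F \<in> S \<and> P F \<and> (\<forall>G\<in>S. P G \<and> G \<noteq> F \<longrightarrow> d G < d F)) = F"
proof (rule the_equality)
  show "F \<in> S \<and> P F \<and> (\<forall>G\<in>S. P G \<and> G \<noteq> F \<longrightarrow> d G < d F)" using assms by blast
  fix F' assume F': "F' \<in> S \<and> P F' \<and> (\<forall>G\<in>S. P G \<and> G \<noteq> F' \<longrightarrow> d G < d F')"
  show "F' = F"
  proof (rule ccontr)
    assume "F' \<noteq> F"
    then have "d F' < d F" "d F < d F'" using assms F' by auto
    then show False by simp
  qed
qed

context
  fixes A :: "'a::euclidean_space set set" and f0 :: "'a \<Rightarrow> real" and \<Delta> :: "'a set" and c d
  assumes A: "arrangement A" and f: "f0 = (\<lambda>x. c \<bullet> x + d)" and \<Delta>: "\<Delta> \<in> bdd_or_growing A f0"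
begin

lemma support_face_maximal:
  shows "support_face A f0 \<Delta> \<in> faces A" and "support_face A f0 \<Delta> \<subseteq> min_set f0 \<Delta>"
    and "\<And>G. G \<in> faces A \<Longrightarrow> G \<subseteq> min_set f0 \<Delta> \<Longrightarrow> G \<noteq> support_face A f0 \<Delta> \<Longrightarrow>
           aff_dim G < aff_dim (support_face A f0 \<Delta>)"
proof -
  have D: "\<Delta> \<in> domains A" using \<Delta> unfolding bdd_or_growing_def by simp
  have "min_set f0 \<Delta> \<noteq> {}"
  proof (rule min_set_nonempty)
    show "continuous_on UNIV f0" unfolding f by (intro continuous_intros)
    show "\<Delta> \<noteq> {}" using D in_components_nonempty unfolding domains_def by blast
    show "bounded \<Delta> \<or> (\<forall>M. \<exists>R. \<forall>x\<in>\<Delta>. R \<le> norm x \<longrightarrow> M \<le> f0 x)"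
      using \<Delta> unfolding bdd_or_growing_def growing_def by blast
  qed
  moreover have "min_set f0 \<Delta> face_of closure \<Delta>"
    by (rule min_set_face_of[OF convex_closure_domain[OF A D] f])
  ultimately obtain G0 where G0: "G0 \<in> faces A" "G0 \<subseteq> min_set f0 \<Delta>"
    and greatest: "\<And>G. G \<in> faces A \<Longrightarrow> G \<subseteq> min_set f0 \<Delta> \<Longrightarrow> G \<noteq> G0 \<Longrightarrow> aff_dim G < aff_dim G0"
    using max_dim_face_in_face_of_closure_domain[OF A D] by metis
  have "support_face A f0 \<Delta> = G0"
    unfolding support_face_def by (rule the_strictly_greatest_eqI) (simp_all add: G0 greatest)
  then show "support_face A f0 \<Delta> \<in> faces A" "support_face A f0 \<Delta> \<subseteq> min_set f0 \<Delta>"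
    "\<And>G. G \<in> faces A \<Longrightarrow> G \<subseteq> min_set f0 \<Delta> \<Longrightarrow> G \<noteq> support_face A f0 \<Delta> \<Longrightarrow>
       aff_dim G < aff_dim (support_face A f0 \<Delta>)"
    using G0 greatest by auto
qed

lemma some_support_face_in_min_set: "(SOME x. x \<in> support_face A f0 \<Delta>) \<in> min_set f0 \<Delta>"
  using support_face_maximal(1,2) empty_not_face by (metis some_in_eq subsetD)

lemma eventually_corr_positive:
  "\<forall>\<^sub>F t in at_top. 0 < t \<and> corr f0 t \<Delta> \<noteq> {} \<and> (\<forall>x\<in>corr f0 t \<Delta>. 0 < ft f0 t x)"
proof -
  obtain p where p: "p \<in> \<Delta>"
    using \<Delta> in_components_nonempty unfolding bdd_or_growing_def domains_def by blast
  obtain K where K: "f0 p \<le> K" "bounded \<Delta> \<Longrightarrow> \<forall>x\<in>\<Delta>. f0 x \<le> K"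
  proof (cases "bounded \<Delta>")
    case True
    have "compact (f0 ` closure \<Delta>)"
      using True unfolding f by (intro compact_continuous_image continuous_intros) simp
    then have "bdd_above (f0 ` \<Delta>)"
      by (meson bounded_imp_bdd_above bounded_subset closure_subset compact_imp_bounded image_mono)
    then show ?thesis using that p by (auto simp: bdd_above_def)
  qed auto
  show ?thesis
    using eventually_gt_at_top[of "max 0 K"]
  proof eventually_elim
    case (elim t)
    have "p \<in> corr f0 t \<Delta>" using p K(1) elim unfolding corr_def by auto
    moreover have "f0 x < t" if "x \<in> corr f0 t \<Delta>" for x
    proof (cases "bounded \<Delta>")
      case True
      then show ?thesis using that K(2) elim unfolding corr_def by fastforce
    qed (use that in \<open>simp add: corr_def\<close>)
    ultimately show ?case using elim ft_pos_iff[of t f0] by auto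
  qed
qed

context
  fixes t :: real
  assumes t: "0 < t" and ne: "corr f0 t \<Delta> \<noteq> {}" and pos: "\<forall>x\<in>corr f0 t \<Delta>. 0 < ft f0 t x"
begin

lemma min_set_below_t: "min_set f0 \<Delta> \<subseteq> {x. f0 x < t}"
proof -
  define x1 where "x1 = (SOME x. x \<in> support_face A f0 \<Delta>)"
  have x1: "x1 \<in> min_set f0 \<Delta>" unfolding x1_def by (rule some_support_face_in_min_set)
  obtain y where y: "y \<in> corr f0 t \<Delta>" using ne by blast
  have "y \<in> \<Delta>" using y unfolding corr_def by (auto split: if_splits)
  then have "f0 x1 \<le> f0 y" using x1 closure_subset unfolding min_set_def by blast
  also have "f0 y < t" using pos y ft_pos_iff[OF t] by blast
  finally show ?thesis using min_set_eq_level[OF x1] by auto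
qed

lemma min_set_corr: "min_set f0 (corr f0 t \<Delta>) = min_set f0 \<Delta>"
proof (cases "bounded \<Delta>")
  case False
  have "open {x. f0 x < t}" unfolding f by (intro open_Collect_less continuous_intros)
  from min_set_Int_open[OF this _ min_set_below_t] show ?thesis
    using some_support_face_in_min_set False unfolding corr_def by auto
qed (simp add: corr_def)

lemma ext_support_corr_eq_support_face:
  "ext_support (At A f0 t) (corr f0 t \<Delta>) (ft f0 t) = support_face A f0 \<Delta>"
proof -
  define M where "M = min_set f0 \<Delta>"
  define m where "m = f0 (SOME x. x \<in> support_face A f0 \<Delta>)"
  have M_level: "M \<subseteq> {x. f0 x = m}"
    using min_set_eq_level[OF some_support_face_in_min_set] unfolding M_def m_def by blast
  have below: "m < t" using min_set_below_t some_support_face_in_min_set unfolding m_def by blast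
  have faces_iff: "G \<in> faces (At A f0 t) \<longleftrightarrow> G \<in> faces A" if "G \<subseteq> M" for G
  proof (cases "G = {}")
    case False
    have "G \<inter> {x. f0 x = t} = {}" using that M_level below by auto
    then show ?thesis
      using face_insert_disjoint face_insert_level_set_imp_face[OF A f _ False _ below] that M_level
      unfolding At_eq_insert[OF t[THEN less_imp_neq, symmetric]] by blast
  qed (simp add: empty_not_face)
  have const: "\<exists>v. \<forall>x\<in>G. ft f0 t x = v" if "G \<subseteq> M" for G
    using that M_level unfolding ft_def by (intro exI[of _ "1 - m / t"]) auto
  have "max_abs_set (ft f0 t) (corr f0 t \<Delta>) = M"
    unfolding M_def min_set_corr[symmetric]
    by (rule max_abs_set_ft_eq_min_set[OF t _ pos]) (simp only: f, intro continuous_intros)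
  then show ?thesis
    unfolding ext_support_def
    using the_strictly_greatest_eqI[of "support_face A f0 \<Delta>" "faces (At A f0 t)"
        "\<lambda>G. G \<subseteq> M \<and> (\<exists>v. \<forall>x\<in>G. ft f0 t x = v)" aff_dim, unfolded conj_assoc]
      support_face_maximal[folded M_def] faces_iff const
    by simp
qed

lemma c_const_corr_eq:
  "c_const (At A f0 t) (ft f0 t) (gt f0 t) (corr f0 t \<Delta>)
    = (1 + - f0 (SOME x. x \<in> support_face A f0 \<Delta>) / t) powr t"
proof -
  define x0 where "x0 = (SOME x. x \<in> support_face A f0 \<Delta>)"
  have x0: "x0 \<in> min_set f0 \<Delta>" unfolding x0_def by (rule some_support_face_in_min_set)
  then have "x0 \<in> closure (corr f0 t \<Delta>)" using min_set_corr unfolding min_set_def by blast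
  moreover have "open {x. f0 x < t}" unfolding f by (intro open_Collect_less continuous_intros)
  then have "open (corr f0 t \<Delta>)"
    using open_domain[OF A] \<Delta> unfolding corr_def bdd_or_growing_def by auto
  moreover have "f0 x0 < t" using min_set_below_t x0 by blast
  then have "isCont (gt f0 t) x0"
    unfolding gt_def ft_def f using t
    by (intro continuous_at_within_powr continuous_intros) (auto simp: field_simps)
  ultimately show ?thesis
    unfolding c_const_def ext_value_def ext_support_corr_eq_support_face
      x0_def[symmetric] by (simp add: Lim_at_within_open_closure gt_def ft_def)
qed

end

end

lemma large_enough_corr_nonempty:
  assumes "large_enough A f0 t" and "\<Delta> \<in> bdd_or_growing A f0"
  shows "0 < t" and "corr f0 t \<Delta> \<noteq> {}"
proof -
  show "0 < t" using assms(1) unfolding large_enough_def by simp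
  have "corr f0 t \<Delta> \<in> bounded_domains (At A f0 t)"
    using assms(1) bij_betw_apply[OF _ assms(2)] unfolding large_enough_def by blast
  then show "corr f0 t \<Delta> \<noteq> {}"
    using in_components_nonempty unfolding bounded_domains_def domains_def by blast
qed

theorem lemma6:
  fixes A :: "'a::euclidean_space set set" and f0 :: "'a \<Rightarrow> real" and \<Delta> :: "'a set"
  assumes "arrangement A" and "essential A" and "affine_nonconst f0"
    and "\<Delta> \<in> bdd_or_growing A f0"
  shows "(\<forall>t. large_enough A f0 t \<and> (\<forall>x\<in>corr f0 t \<Delta>. ft f0 t x > 0) \<longrightarrow>
            ext_support (At A f0 t) (corr f0 t \<Delta>) (ft f0 t) \<in> faces A)
       \<and> (\<forall>\<^sub>F t in at_top. ext_support (At A f0 t) (corr f0 t \<Delta>) (ft f0 t) = support_face A f0 \<Delta>)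
       \<and> ((\<lambda>t. c_const (At A f0 t) (ft f0 t) (gt f0 t) (corr f0 t \<Delta>))
            \<longlongrightarrow> exp (- f0 (SOME x. x \<in> support_face A f0 \<Delta>))) at_top"
proof -
  obtain c d where f: "f0 = (\<lambda>x. c \<bullet> x + d)" using assms(3) unfolding affine_nonconst_def by blast
  note ext_support = ext_support_corr_eq_support_face[OF assms(1) f assms(4)]
  note eventually_positive = eventually_corr_positive[OF assms(1) f assms(4)]
  have in_faces: "ext_support (At A f0 t) (corr f0 t \<Delta>) (ft f0 t) \<in> faces A"
    if "large_enough A f0 t" "\<forall>x\<in>corr f0 t \<Delta>. 0 < ft f0 t x" for t
    using ext_support large_enough_corr_nonempty[OF that(1) assms(4)] that(2)
      support_face_maximal(1)[OF assms(1) f assms(4)]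
    by simp
  have "\<forall>\<^sub>F t in at_top. ext_support (At A f0 t) (corr f0 t \<Delta>) (ft f0 t) = support_face A f0 \<Delta>"
    using eventually_positive by (rule eventually_mono) (metis ext_support)
  moreover have "\<forall>\<^sub>F t in at_top. (1 + - f0 (SOME x. x \<in> support_face A f0 \<Delta>) / t) powr t
      = c_const (At A f0 t) (ft f0 t) (gt f0 t) (corr f0 t \<Delta>)"
    using eventually_positive by (rule eventually_mono) (metis c_const_corr_eq[OF assms(1) f assms(4)])
  then have "((\<lambda>t. c_const (At A f0 t) (ft f0 t) (gt f0 t) (corr f0 t \<Delta>))
      \<longlongrightarrow> exp (- f0 (SOME x. x \<in> support_face A f0 \<Delta>))) at_top"
    by (rule Lim_transform_eventually[OF tendsto_exp_limit_at_top])
  ultimately show ?thesis using in_faces by blast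
qed

end
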